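(* Let $G=(V,E)$ be a finite, simple, connected reflective graph and let $z\in V$. Suppose the subgraph induced on $S_1(z)$ is disconnected. Then $G$ is a cartesian product of two non-trivial graphs.
   Context: $d$ is the combinatorial distance and $S_1(z)=\{v:d(v,z)=1\}$. For adjacent $x\sim y$ let $V_x^y=\{v: d(v,x)<d(v,y)\}$, $V^{xy}=\{v:d(v,x)=d(v,y)\}$. A reflection from $x$ to $y$ is a graph automorphism $\phi$ with $\phi\circ\phi=\mathrm{id}$, $\phi(x)=y$, such that the edges between $V_x^y$ and $V_y^x$ are exactly $\{\{x',\phi(x')\}:x'\in V_x^y\}$ and $\phi$ fixes $V^{xy}$ pointwise. $G$ is reflective if every edge admits a reflection. Cartesian product: $(a,b)\sim(a',b')$ iff ($a=a'$, $b\sim b'$) or ($a\sim a'$, $b=b'$); non-trivial means having at least two vertices. *)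

theory Defs
  imports Main
begin

definition simple_graph :: "'a set \<Rightarrow> ('a \<Rightarrow> 'a \<Rightarrow> bool) \<Rightarrow> bool" where
  "simple_graph V E \<longleftrightarrow> finite V \<and> (\<forall>u v. E u v \<longrightarrow> u \<in> V \<and> v \<in> V)
     \<and> (\<forall>u v. E u v \<longrightarrow> E v u) \<and> (\<forall>u. \<not> E u u)"

definition gdist :: "('a \<Rightarrow> 'a \<Rightarrow> bool) \<Rightarrow> 'a \<Rightarrow> 'a \<Rightarrow> nat" where
  "gdist E u v = (LEAST n. (E ^^ n) u v)"

definition connected_graph :: "'a set \<Rightarrow> ('a \<Rightarrow> 'a \<Rightarrow> bool) \<Rightarrow> bool" where
  "connected_graph V E \<longleftrightarrow> (\<forall>u\<in>V. \<forall>v\<in>V. \<exists>n. (E ^^ n) u v)"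

definition induced :: "('a \<Rightarrow> 'a \<Rightarrow> bool) \<Rightarrow> 'a set \<Rightarrow> 'a \<Rightarrow> 'a \<Rightarrow> bool" where
  "induced E S = (\<lambda>x y. E x y \<and> x \<in> S \<and> y \<in> S)"

definition disconnected_graph :: "'a set \<Rightarrow> ('a \<Rightarrow> 'a \<Rightarrow> bool) \<Rightarrow> bool" where
  "disconnected_graph V E \<longleftrightarrow> (\<exists>u\<in>V. \<exists>v\<in>V. \<not> (\<exists>n. (E ^^ n) u v))"

definition sphere1 :: "'a set \<Rightarrow> ('a \<Rightarrow> 'a \<Rightarrow> bool) \<Rightarrow> 'a \<Rightarrow> 'a set" where
  "sphere1 V E z = {v \<in> V. gdist E v z = 1}"

definition half :: "'a set \<Rightarrow> ('a \<Rightarrow> 'a \<Rightarrow> bool) \<Rightarrow> 'a \<Rightarrow> 'a \<Rightarrow> 'a set" where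
  "half V E x y = {v \<in> V. gdist E v x < gdist E v y}"

definition equi :: "'a set \<Rightarrow> ('a \<Rightarrow> 'a \<Rightarrow> bool) \<Rightarrow> 'a \<Rightarrow> 'a \<Rightarrow> 'a set" where
  "equi V E x y = {v \<in> V. gdist E v x = gdist E v y}"

definition automorphism :: "'a set \<Rightarrow> ('a \<Rightarrow> 'a \<Rightarrow> bool) \<Rightarrow> ('a \<Rightarrow> 'a) \<Rightarrow> bool" where
  "automorphism V E \<phi> \<longleftrightarrow> bij_betw \<phi> V V \<and> (\<forall>u\<in>V. \<forall>v\<in>V. E u v \<longleftrightarrow> E (\<phi> u) (\<phi> v))"

definition reflection :: "'a set \<Rightarrow> ('a \<Rightarrow> 'a \<Rightarrow> bool) \<Rightarrow> 'a \<Rightarrow> 'a \<Rightarrow> ('a \<Rightarrow> 'a) \<Rightarrow> bool" where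
  "reflection V E x y \<phi> \<longleftrightarrow> automorphism V E \<phi> \<and> (\<forall>v\<in>V. \<phi> (\<phi> v) = v) \<and> \<phi> x = y
     \<and> {{a, b} | a b. a \<in> half V E x y \<and> b \<in> half V E y x \<and> E a b}
        = {{a, \<phi> a} | a. a \<in> half V E x y}
     \<and> (\<forall>v\<in>equi V E x y. \<phi> v = v)"

definition reflective :: "'a set \<Rightarrow> ('a \<Rightarrow> 'a \<Rightarrow> bool) \<Rightarrow> bool" where
  "reflective V E \<longleftrightarrow> (\<forall>x\<in>V. \<forall>y\<in>V. E x y \<longrightarrow> (\<exists>\<phi>. reflection V E x y \<phi>))"

definition cart_adj :: "('b \<Rightarrow> 'b \<Rightarrow> bool) \<Rightarrow> ('c \<Rightarrow> 'c \<Rightarrow> bool) \<Rightarrow> 'b \<times> 'c \<Rightarrow> 'b \<times> 'c \<Rightarrow> bool" where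
  "cart_adj EA EB p q \<longleftrightarrow> (fst p = fst q \<and> EB (snd p) (snd q)) \<or> (EA (fst p) (fst q) \<and> snd p = snd q)"

text \<open>G is (isomorphic to) a Cartesian product of two non-trivial simple graphs.
  Factor graphs are finite (at most |V| vertices), so vertices of type nat suffice.\<close>
definition is_cartesian_product :: "'a set \<Rightarrow> ('a \<Rightarrow> 'a \<Rightarrow> bool) \<Rightarrow> bool" where
  "is_cartesian_product V E \<longleftrightarrow>
     (\<exists>(A::nat set) EA (B::nat set) EB f.
        simple_graph A EA \<and> simple_graph B EB \<and> card A \<ge> 2 \<and> card B \<ge> 2
        \<and> bij_betw f V (A \<times> B)
        \<and> (\<forall>u\<in>V. \<forall>v\<in>V. E u v \<longleftrightarrow> cart_adj EA EB (f u) (f v)))"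

end

theory Submission
  imports Defs
begin

(* Let Theta be the Djokovic-Winkler relation on edges.
   In a reflective graph every edge between V_x^y and V_y^x has the same signed distance profile
   v \<mapsto> d(v,a) - d(v,b) as xy itself; this follows by induction on distance, using that folding
   V_y^x onto V_x^y along the reflection is 1-Lipschitz.  Hence, for a component C of S_1(z), the
   edges Theta-related to some edge zc with c \<in> C form a Theta-closed class whose complement is
   Theta-closed as well, and both classes contain edges at z because S_1(z) is disconnected.
   Any such partition of the edges yields a product: reflections complete two edges of different
   classes at a vertex to a square, and an edge separating x from y cannot be crossed by a path
   inside the other class, so every vertex is determined by its projections onto the two layers
   through z. *)

definition image_graph :: "('b \<Rightarrow> 'c) \<Rightarrow> 'b set \<Rightarrow> ('b \<Rightarrow> 'b \<Rightarrow> bool) \<Rightarrow> 'c \<Rightarrow> 'c \<Rightarrow> bool" where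
  "image_graph h A EA i j \<longleftrightarrow> i \<in> h ` A \<and> j \<in> h ` A \<and> EA (inv_into A h i) (inv_into A h j)"

lemma image_graph_image_iff:
  "inj_on h A \<Longrightarrow> a \<in> A \<Longrightarrow> a' \<in> A \<Longrightarrow> image_graph h A EA (h a) (h a') \<longleftrightarrow> EA a a'"
  by (simp add: image_graph_def)

lemma simple_graph_image_graph:
  "simple_graph A EA \<Longrightarrow> simple_graph (h ` A) (image_graph h A EA)"
  by (auto simp: simple_graph_def image_graph_def)

lemma cart_adj_map_prod:
  assumes "inj_on hA A" "inj_on hB B" "p \<in> A \<times> B" "q \<in> A \<times> B"
  shows "cart_adj (image_graph hA A EA) (image_graph hB B EB) (map_prod hA hB p) (map_prod hA hB q)
    \<longleftrightarrow> cart_adj EA EB p q"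
  using assms by (auto simp: cart_adj_def image_graph_image_iff inj_on_eq_iff)

lemma is_cartesian_productI:
  fixes A :: "'b set" and B :: "'c set" and f :: "'a \<Rightarrow> 'b \<times> 'c"
  assumes A: "simple_graph A EA" and B: "simple_graph B EB" and "card A \<ge> 2" "card B \<ge> 2"
    and f: "bij_betw f V (A \<times> B)"
    and adj: "\<And>u v. u \<in> V \<Longrightarrow> v \<in> V \<Longrightarrow> E u v \<longleftrightarrow> cart_adj EA EB (f u) (f v)"
  shows "is_cartesian_product V E"
proof -
  obtain hA :: "'b \<Rightarrow> nat" where hA: "inj_on hA A"
    using A finite_imp_inj_to_nat_seg unfolding simple_graph_def by meson
  obtain hB :: "'c \<Rightarrow> nat" where hB: "inj_on hB B"
    using B finite_imp_inj_to_nat_seg unfolding simple_graph_def by meson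
  let ?F = "\<lambda>v. map_prod hA hB (f v)"
  have "bij_betw ?F V (hA ` A \<times> hB ` B)"
    using bij_betw_trans[OF f bij_betw_map_prod[OF inj_on_imp_bij_betw[OF hA] inj_on_imp_bij_betw[OF hB]]]
    by (simp add: comp_def)
  moreover have "E u v \<longleftrightarrow> cart_adj (image_graph hA A EA) (image_graph hB B EB) (?F u) (?F v)"
    if "u \<in> V" "v \<in> V" for u v
  proof -
    have "f u \<in> A \<times> B" "f v \<in> A \<times> B" using f that by (auto simp: bij_betw_def)
    then show ?thesis using adj[OF that] cart_adj_map_prod[OF hA hB] by simp
  qed
  moreover have "card (hA ` A) \<ge> 2" "card (hB ` B) \<ge> 2"
    using assms(3,4) card_image[OF hA] card_image[OF hB] by simp_all
  ultimately show ?thesis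
    unfolding is_cartesian_product_def
    using simple_graph_image_graph[OF A] simple_graph_image_graph[OF B] by blast
qed

section \<open>Distances in connected simple graphs\<close>

locale connected_simple_graph =
  fixes V :: "'a set" and E :: "'a \<Rightarrow> 'a \<Rightarrow> bool"
  assumes simple: "simple_graph V E" and connected: "connected_graph V E"
begin

abbreviation d :: "'a \<Rightarrow> 'a \<Rightarrow> nat" where "d \<equiv> gdist E"
abbreviation H :: "'a \<Rightarrow> 'a \<Rightarrow> 'a set" where "H \<equiv> half V E"
abbreviation M :: "'a \<Rightarrow> 'a \<Rightarrow> 'a set" where "M \<equiv> equi V E"

lemma finite_V: "finite V"
  using simple by (simp add: simple_graph_def)

lemma adj_vertices:
  assumes "E u v" shows "u \<in> V" "v \<in> V"
  using simple assms by (simp_all add: simple_graph_def)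

lemma adj_sym: "E u v \<Longrightarrow> E v u"
  using simple by (simp add: simple_graph_def)

lemma adj_irrefl: "\<not> E u u"
  using simple by (simp add: simple_graph_def)

lemma simple_graph_induced: "S \<subseteq> V \<Longrightarrow> simple_graph S (induced E S)"
  using finite_V adj_sym adj_irrefl finite_subset by (auto simp: simple_graph_def induced_def)

lemma relpowp_adj_sym: "(E ^^ n) u v \<Longrightarrow> (E ^^ n) v u"
proof (induction n arbitrary: v)
  case (Suc n)
  then obtain t where "(E ^^ n) u t" "E t v" by (blast elim: relpowp_Suc_E)
  then show ?case using Suc.IH adj_sym relpowp_Suc_I2 by metis
qed simp

lemma gdist_sym: "d u v = d v u"
  unfolding gdist_def using relpowp_adj_sym by metis

lemma relpowp_gdist: "u \<in> V \<Longrightarrow> v \<in> V \<Longrightarrow> (E ^^ d u v) u v"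
  unfolding gdist_def using connected unfolding connected_graph_def by (meson LeastI_ex)

lemma gdist_le: "(E ^^ n) u v \<Longrightarrow> d u v \<le> n"
  unfolding gdist_def by (rule Least_le)

lemma gdist_self [simp]: "d u u = 0"
  using gdist_le[of 0 u u] by simp

lemma gdist_eq_0_iff: "u \<in> V \<Longrightarrow> v \<in> V \<Longrightarrow> d u v = 0 \<longleftrightarrow> u = v"
  using relpowp_gdist[of u v] by auto

lemma gdist_eq_1_iff:
  assumes "u \<in> V" "v \<in> V" shows "d u v = 1 \<longleftrightarrow> E u v"
proof
  assume "d u v = 1"
  then show "E u v" using relpowp_gdist[OF assms] relpowp_1 by metis
next
  assume "E u v"
  then have "d u v \<le> 1" "u \<noteq> v" using gdist_le[of 1 u v] adj_irrefl by auto
  then show "d u v = 1" using gdist_eq_0_iff[OF assms] by linarith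
qed

lemma gdist_adj: "E u v \<Longrightarrow> d u v = 1"
  using gdist_eq_1_iff adj_vertices by blast

lemma gdist_triangle: "u \<in> V \<Longrightarrow> v \<in> V \<Longrightarrow> w \<in> V \<Longrightarrow> d u w \<le> d u v + d v w"
  using relpowp_gdist[of u v] relpowp_gdist[of v w] relpowp_trans gdist_le by metis

lemma gdist_adj_le: "E v w \<Longrightarrow> u \<in> V \<Longrightarrow> d u w \<le> d u v + 1"
  using gdist_triangle[of u v w] gdist_adj[of v w] adj_vertices by fastforce

lemma gdist_SucE:
  assumes "u \<in> V" "p \<in> V" "d u p = Suc n"
  obtains t where "E p t" "d u t = n"
proof -
  from relpowp_gdist[OF assms(1,2)] assms(3) have "(E ^^ Suc n) u p" by simp
  then obtain t where walk: "(E ^^ n) u t" and tp: "E t p" by (rule relpowp_Suc_E)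
  have "d u t \<le> n" using gdist_le[OF walk] .
  moreover have "d u p \<le> d u t + 1" using gdist_adj_le[OF tp assms(1)] .
  ultimately have "d u t = n" using assms(3) by simp
  with tp show ?thesis using that adj_sym by blast
qed

lemma gdist_eq_2:
  assumes "E v u" "E v w" "u \<noteq> w" "\<not> E u w"
  shows "d u w = 2"
proof -
  have V: "u \<in> V" "v \<in> V" "w \<in> V" using assms(1,2) adj_vertices by auto
  have "d u w \<le> d u v + d v w" using gdist_triangle V by blast
  also have "\<dots> = 2" using assms(1,2) gdist_adj adj_sym by simp
  finally show ?thesis
    using gdist_eq_0_iff[OF V(1,3)] gdist_eq_1_iff[OF V(1,3)] assms(3,4) by linarith
qed

lemma mem_sphere1: "z \<in> V \<Longrightarrow> v \<in> sphere1 V E z \<longleftrightarrow> E z v"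
  using gdist_eq_1_iff[of v z] adj_sym adj_vertices by (auto simp: sphere1_def)

lemma disconnected_sphere1E:
  assumes z: "z \<in> V" and "disconnected_graph (sphere1 V E z) (induced E (sphere1 V E z))"
  obtains C c k where "\<And>c. c \<in> C \<Longrightarrow> E z c" "\<And>c k. c \<in> C \<Longrightarrow> E z k \<Longrightarrow> E c k \<Longrightarrow> k \<in> C"
    and "c \<in> C" "E z k" "k \<notin> C"
proof -
  let ?S = "sphere1 V E z"
  obtain c k where c: "c \<in> ?S" and k: "k \<in> ?S" and not_conn: "\<not> (\<exists>n. (induced E ?S ^^ n) c k)"
    using assms(2) unfolding disconnected_graph_def by blast
  define C where "C = {w. (induced E ?S)\<^sup>*\<^sup>* c w}"
  have C_sphere: "w \<in> ?S" if "w \<in> C" for w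
  proof -
    have "(induced E ?S)\<^sup>*\<^sup>* c w" using that by (simp add: C_def)
    then show ?thesis by (induction rule: rtranclp_induct) (use c in \<open>auto simp: induced_def\<close>)
  qed
  show ?thesis
  proof (rule that)
    show "E z w" if "w \<in> C" for w using C_sphere[OF that] mem_sphere1[OF z] by blast
    show "w' \<in> C" if "w \<in> C" "E z w'" "E w w'" for w w'
    proof -
      have "induced E ?S w w'" using C_sphere[OF that(1)] that(2,3) mem_sphere1[OF z]
        by (simp add: induced_def)
      then show ?thesis using that(1) by (auto simp: C_def intro: rtranclp.rtrancl_into_rtrancl)
    qed
    show "c \<in> C" by (simp add: C_def)
    show "E z k" using k mem_sphere1[OF z] by blast
    show "k \<notin> C" using not_conn rtranclp_imp_relpowp[of "induced E ?S" c k] by (auto simp: C_def)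
  qed
qed

lemma mem_half: "v \<in> H x y \<longleftrightarrow> v \<in> V \<and> d v x < d v y"
  by (simp add: half_def)

lemma mem_equi: "v \<in> M x y \<longleftrightarrow> v \<in> V \<and> d v x = d v y"
  by (simp add: equi_def)

lemma half_trichotomy: "v \<in> V \<Longrightarrow> v \<in> H x y \<or> v \<in> H y x \<or> v \<in> M x y"
  by (auto simp: mem_half mem_equi)

definition side :: "'a \<Rightarrow> 'a \<Rightarrow> 'a \<Rightarrow> int" where
  "side a b v = int (d v a) - int (d v b)"

(* The Djokovic-Winkler relation: d(p,a) + d(q,b) \<noteq> d(p,b) + d(q,a). *)
definition theta :: "'a \<Rightarrow> 'a \<Rightarrow> 'a \<Rightarrow> 'a \<Rightarrow> bool" where
  "theta p q a b \<longleftrightarrow> side a b p \<noteq> side a b q"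

lemma theta_commute: "theta p q a b \<longleftrightarrow> theta a b p q"
  unfolding theta_def side_def
  using gdist_sym[of p a] gdist_sym[of p b] gdist_sym[of q a] gdist_sym[of q b] by auto

lemma theta_swap_left: "theta p q a b \<longleftrightarrow> theta q p a b"
  unfolding theta_def by auto

lemma theta_swap_right: "theta p q a b \<longleftrightarrow> theta p q b a"
  unfolding theta_def side_def by auto

lemma theta_adj_self: "E a b \<Longrightarrow> theta a b a b"
  using gdist_adj[of a b] adj_sym[of a b] gdist_adj[of b a] by (simp add: theta_def side_def)

lemma side_near: "E a b \<Longrightarrow> v \<in> H a b \<Longrightarrow> side a b v = -1"
  using gdist_adj_le[of a b v] by (auto simp: side_def mem_half)

lemma side_far: "E a b \<Longrightarrow> v \<in> H b a \<Longrightarrow> side a b v = 1"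
  using gdist_adj_le[of b a v] adj_sym by (fastforce simp: side_def mem_half)

lemma side_equi: "v \<in> M a b \<Longrightarrow> side a b v = 0"
  by (simp add: side_def mem_equi)

section \<open>Reflections\<close>

context
  fixes x y \<phi>
  assumes is_reflection: "reflection V E x y \<phi>" and adj_xy: "E x y"
begin

lemma reflection_in_V: "u \<in> V \<Longrightarrow> \<phi> u \<in> V"
  using is_reflection by (auto simp: reflection_def automorphism_def bij_betw_def)

lemma reflection_involutive: "u \<in> V \<Longrightarrow> \<phi> (\<phi> u) = u"
  using is_reflection by (simp add: reflection_def)

lemma reflection_adj_iff: "u \<in> V \<Longrightarrow> v \<in> V \<Longrightarrow> E (\<phi> u) (\<phi> v) \<longleftrightarrow> E u v"
  using is_reflection by (simp add: reflection_def automorphism_def)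

lemma reflection_x: "\<phi> x = y"
  using is_reflection by (simp add: reflection_def)

lemma reflection_y: "\<phi> y = x"
  using reflection_involutive reflection_x adj_vertices(1)[OF adj_xy] by metis

lemma reflection_fixes_equi: "v \<in> M x y \<Longrightarrow> \<phi> v = v"
  using is_reflection by (simp add: reflection_def)

lemma relpowp_reflection: "u \<in> V \<Longrightarrow> (E ^^ n) u v \<Longrightarrow> (E ^^ n) (\<phi> u) (\<phi> v)"
proof (induction n arbitrary: v)
  case (Suc n)
  from Suc.prems(2) obtain t where walk: "(E ^^ n) u t" and tv: "E t v" by (rule relpowp_Suc_E)
  have "E (\<phi> t) (\<phi> v)" using reflection_adj_iff tv adj_vertices by blast
  then show ?case using Suc.IH[OF Suc.prems(1) walk] relpowp_Suc_I by metis
qed simp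

lemma gdist_reflection:
  assumes "u \<in> V" "v \<in> V" shows "d (\<phi> u) (\<phi> v) = d u v"
proof -
  have "(E ^^ n) (\<phi> u) (\<phi> v) \<longleftrightarrow> (E ^^ n) u v" for n
    using relpowp_reflection[OF assms(1), of n v] relpowp_reflection[OF reflection_in_V, of u n "\<phi> v"]
      reflection_involutive assms by auto
  then show ?thesis unfolding gdist_def by simp
qed

lemma reflection_mem_half_iff:
  assumes "v \<in> V"
  shows "\<phi> v \<in> H x y \<longleftrightarrow> v \<in> H y x" and "\<phi> v \<in> H y x \<longleftrightarrow> v \<in> H x y"
proof -
  have "d (\<phi> v) x = d v y" "d (\<phi> v) y = d v x"
    using gdist_reflection[OF assms adj_vertices(2)[OF adj_xy]]
      gdist_reflection[OF assms adj_vertices(1)[OF adj_xy]] by (simp_all add: reflection_x reflection_y)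
  then show "\<phi> v \<in> H x y \<longleftrightarrow> v \<in> H y x" and "\<phi> v \<in> H y x \<longleftrightarrow> v \<in> H x y"
    using assms reflection_in_V by (auto simp: mem_half)
qed

lemma crossing_edges:
  "{{a, b} | a b. a \<in> H x y \<and> b \<in> H y x \<and> E a b} = {{a, \<phi> a} | a. a \<in> H x y}"
  using is_reflection by (simp add: reflection_def)

lemma reflection_crossing_adj: "a \<in> H x y \<Longrightarrow> E a (\<phi> a)"
proof -
  assume "a \<in> H x y"
  then have "{a, \<phi> a} \<in> {{a, b} | a b. a \<in> H x y \<and> b \<in> H y x \<and> E a b}"
    unfolding crossing_edges by blast
  then obtain a' b' where "{a, \<phi> a} = {a', b'}" "E a' b'" by blast
  then show "E a (\<phi> a)" using adj_sym by (auto simp: doubleton_eq_iff)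
qed

lemma crossing_edge_eq_reflection: "a \<in> H x y \<Longrightarrow> b \<in> H y x \<Longrightarrow> E a b \<Longrightarrow> b = \<phi> a"
proof -
  assume a: "a \<in> H x y" and b: "b \<in> H y x" and "E a b"
  then have "{a, b} \<in> {{a, \<phi> a} | a. a \<in> H x y}"
    unfolding crossing_edges[symmetric] by blast
  then obtain a' where "{a, b} = {a', \<phi> a'}" "a' \<in> H x y" by blast
  then show "b = \<phi> a" using b by (auto simp: doubleton_eq_iff mem_half)
qed

lemma reflection_near_neighbour: "u \<in> H x y \<Longrightarrow> t \<in> H x y \<Longrightarrow> E (\<phi> u) t \<Longrightarrow> t = u"
proof -
  assume u: "u \<in> H x y" and t: "t \<in> H x y" and "E (\<phi> u) t"
  have "\<phi> u \<in> H y x" using u reflection_mem_half_iff(2) by (simp add: mem_half)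
  then have "\<phi> u = \<phi> t" using crossing_edge_eq_reflection[OF t] \<open>E (\<phi> u) t\<close> adj_sym by blast
  moreover have "u \<in> V" "t \<in> V" using u t by (simp_all add: mem_half)
  ultimately show "t = u" using reflection_involutive by metis
qed

definition retract :: "'a \<Rightarrow> 'a" where
  "retract v = (if v \<in> H y x then \<phi> v else v)"

lemma retract_adj_crossing:
  assumes qp: "E q p" and p: "p \<in> H y x" and q: "q \<notin> H y x"
  shows "retract q = retract p \<or> E (retract q) (retract p)"
proof -
  have V: "q \<in> V" "p \<in> V" using adj_vertices[OF qp] by auto
  have retract: "retract q = q" "retract p = \<phi> p" using p q by (simp_all add: retract_def)
  consider "q \<in> H x y" | "q \<in> M x y" using half_trichotomy[OF V(1)] q by blast
  then show ?thesis
  proof cases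
    case 1
    then have "p = \<phi> q" using crossing_edge_eq_reflection p qp by blast
    then have "\<phi> p = q" using reflection_involutive[OF V(1)] by simp
    then show ?thesis using retract by simp
  next
    case 2
    have "E (\<phi> q) (\<phi> p)" using reflection_adj_iff V qp by simp
    then show ?thesis using retract reflection_fixes_equi[OF 2] by simp
  qed
qed

lemma retract_adj:
  assumes "E q p" shows "retract q = retract p \<or> E (retract q) (retract p)"
proof -
  have V: "q \<in> V" "p \<in> V" using adj_vertices[OF assms] by auto
  consider "q \<in> H y x" "p \<in> H y x" | "q \<in> H y x" "p \<notin> H y x"
    | "q \<notin> H y x" "p \<in> H y x" | "q \<notin> H y x" "p \<notin> H y x" by blast
  then show ?thesis
  proof cases
    case 1
    then show ?thesis using assms V reflection_adj_iff by (simp add: retract_def)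
  next
    case 2
    then show ?thesis using retract_adj_crossing[OF adj_sym[OF assms]] adj_sym by metis
  next
    case 3
    then show ?thesis using retract_adj_crossing[OF assms] by blast
  next
    case 4
    then show ?thesis using assms by (simp add: retract_def)
  qed
qed

lemma gdist_retract_le: "w \<in> V \<Longrightarrow> w \<notin> H y x \<Longrightarrow> p \<in> V \<Longrightarrow> d w (retract p) \<le> d w p"
proof (induction "d w p" arbitrary: p)
  case 0
  then have "p = w" using gdist_eq_0_iff by metis
  then show ?case using 0 by (simp add: retract_def)
next
  case (Suc n)
  obtain t where t: "E p t" "d w t = n" using gdist_SucE[OF Suc.prems(1,3)] Suc.hyps(2) by metis
  have "d w (retract t) \<le> n" using Suc.hyps(1)[of t] Suc.prems(1,2) t adj_vertices by simp
  moreover have "d w (retract p) \<le> d w (retract t) + 1"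
    using retract_adj[OF adj_sym[OF t(1)]] gdist_adj_le[OF _ Suc.prems(1), of "retract t" "retract p"]
    by auto
  ultimately show ?case using Suc.hyps(2) by simp
qed

lemma gdist_le_gdist_reflection: "w \<in> V \<Longrightarrow> w \<notin> H y x \<Longrightarrow> u \<in> H x y \<Longrightarrow> d w u \<le> d w (\<phi> u)"
  using gdist_retract_le[of w "\<phi> u"] reflection_mem_half_iff(2) reflection_involutive reflection_in_V
  by (simp add: retract_def mem_half)

end

end

locale reflective_graph = connected_simple_graph +
  assumes reflective: "reflective V E"
begin

lemma reflectionE:
  assumes "E x y" obtains \<phi> where "reflection V E x y \<phi>"
  using reflective assms adj_vertices unfolding reflective_def by blast

text \<open>The second reflection \<open>\<sigma>\<close>, in the edge from \<open>t\<close> to \<open>\<phi> u\<close>, fixes \<open>u\<close> and moves \<open>v\<close>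
  one step closer to \<open>\<phi> u\<close>; each position of \<open>\<sigma> v\<close> relative to \<open>x y\<close> gives a contradiction.\<close>
lemma tie_predecessor_not_equi:
  assumes R: "reflection V E x y \<phi>" and xy: "E x y" and v: "v \<in> H x y" and u: "u \<in> H x y"
    and tie: "d v (\<phi> u) = Suc n" "d v u = Suc n" and t: "E (\<phi> u) t" "d v t = n"
  shows "t \<notin> M x y"
proof
  assume tM: "t \<in> M x y"
  have V: "v \<in> V" "u \<in> V" "t \<in> V" using v u t(1) adj_vertices by (auto simp: mem_half)
  have "E u t"
    using reflection_adj_iff[OF R xy V(2,3)] reflection_fixes_equi[OF R xy tM] t(1) by simp
  have tu: "E t (\<phi> u)" using t(1) adj_sym by blast
  then obtain \<sigma> where S: "reflection V E t (\<phi> u) \<sigma>" by (rule reflectionE)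
  have "v \<in> H t (\<phi> u)" using V tie t by (simp add: mem_half)
  then have v\<sigma>: "E v (\<sigma> v)" by (rule reflection_crossing_adj[OF S tu])
  then have \<sigma>V: "\<sigma> v \<in> V" using adj_vertices by blast
  have "u \<in> M t (\<phi> u)"
    using V gdist_adj[OF \<open>E u t\<close>] gdist_adj[OF reflection_crossing_adj[OF R xy u]]
    by (simp add: mem_equi)
  then have "\<sigma> u = u" by (rule reflection_fixes_equi[OF S tu])
  then have d1: "d (\<sigma> v) u = Suc n" using gdist_reflection[OF S tu V(1,2)] tie by simp
  have d2: "d (\<sigma> v) (\<phi> u) = n"
    using gdist_reflection[OF S tu V(1,3)] reflection_x[OF S tu] t(2) by simp
  consider "\<sigma> v \<in> H x y" | "\<sigma> v \<in> H y x" | "\<sigma> v \<in> M x y" using half_trichotomy \<sigma>V by blast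
  then show False
  proof cases
    case 1
    then have "\<sigma> v \<notin> H y x" by (auto simp: mem_half)
    then show False using gdist_le_gdist_reflection[OF R xy \<sigma>V _ u] d1 d2 by simp
  next
    case 2
    then have "\<sigma> v = \<phi> v" using crossing_edge_eq_reflection[OF R xy v _ v\<sigma>] by simp
    then show False using gdist_reflection[OF R xy V(1,2)] d2 tie by simp
  next
    case 3
    then show False
      using gdist_reflection[OF R xy \<sigma>V V(2)] reflection_fixes_equi[OF R xy 3] d1 d2 by simp
  qed
qed

text \<open>A tie \<open>d v u = d v (\<phi> u)\<close> forces a geodesic predecessor of \<open>\<phi> u\<close> onto the far side,
  and its mirror image is a counterexample closer to \<open>v\<close>.\<close>
lemma gdist_lt_gdist_reflection:
  assumes R: "reflection V E x y \<phi>" and xy: "E x y" and v: "v \<in> H x y" and u: "u \<in> H x y"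
  shows "d v u < d v (\<phi> u)"
  using u
proof (induction "d v u" arbitrary: u rule: less_induct)
  case less
  have V: "v \<in> V" "u \<in> V" using v less.prems by (simp_all add: mem_half)
  have v_near: "v \<notin> H y x" using v by (auto simp: mem_half)
  have u\<phi>: "E u (\<phi> u)" using reflection_crossing_adj[OF R xy less.prems] .
  show ?case
  proof (rule ccontr)
    assume "\<not> d v u < d v (\<phi> u)"
    then have tie: "d v (\<phi> u) = d v u"
      using gdist_le_gdist_reflection[OF R xy V(1) v_near less.prems] by simp
    have "d v u \<noteq> 0"
      using tie gdist_eq_0_iff[OF V] gdist_adj[OF u\<phi>] by auto
    then obtain n where n: "d v u = Suc n" using not0_implies_Suc by blast
    obtain t where t: "E (\<phi> u) t" "d v t = n"
      using gdist_SucE[OF V(1) reflection_in_V[OF R xy V(2)]] tie n by metis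
    have tV: "t \<in> V" using t(1) adj_vertices by blast
    have "t \<notin> H x y" using reflection_near_neighbour[OF R xy less.prems _ t(1)] t(2) n by auto
    moreover have "t \<notin> M x y" using tie_predecessor_not_equi[OF R xy v less.prems _ n t] tie n by simp
    ultimately have "t \<in> H y x" using half_trichotomy[OF tV] by blast
    define s where "s = \<phi> t"
    have s: "s \<in> H x y" using reflection_mem_half_iff(1)[OF R xy tV] \<open>t \<in> H y x\<close> s_def by simp
    have sV: "s \<in> V" using s by (simp add: mem_half)
    have t_eq: "t = \<phi> s" using reflection_involutive[OF R xy tV] s_def by simp
    have "E u s" using t(1) t_eq reflection_adj_iff[OF R xy V(2) sV] by simp
    have "d v s \<le> n" using gdist_le_gdist_reflection[OF R xy V(1) v_near s] t t_eq by simp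
    then have "d v s < d v (\<phi> s)" using less.hyps[OF _ s] n by simp
    then have "d v s + 1 \<le> n" using t t_eq by simp
    moreover have "d v u \<le> d v s + 1" using gdist_adj_le[OF adj_sym[OF \<open>E u s\<close>] V(1)] .
    ultimately show False using n by simp
  qed
qed

lemma side_crossing_edge:
  assumes R: "reflection V E x y \<phi>" and xy: "E x y" and u: "u \<in> H x y" and v: "v \<in> V"
  shows "side u (\<phi> u) v = side x y v"
proof -
  have uV: "u \<in> V" using u by (simp add: mem_half)
  have u\<phi>: "E u (\<phi> u)" using reflection_crossing_adj[OF R xy u] .
  have \<phi>uV: "\<phi> u \<in> V" using u\<phi> adj_vertices by blast
  consider "v \<in> H x y" | "v \<in> H y x" | "v \<in> M x y" using half_trichotomy v by blast
  then show ?thesis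
  proof cases
    case 1
    have "d v u < d v (\<phi> u)" using gdist_lt_gdist_reflection[OF R xy 1 u] .
    then have "v \<in> H u (\<phi> u)" using v by (simp add: mem_half)
    then show ?thesis using side_near[OF u\<phi>] side_near[OF xy 1] by simp
  next
    case 2
    have \<phi>v: "\<phi> v \<in> H x y" using reflection_mem_half_iff(1)[OF R xy v] 2 by simp
    have "d (\<phi> v) u < d (\<phi> v) (\<phi> u)" using gdist_lt_gdist_reflection[OF R xy \<phi>v u] .
    moreover have "d (\<phi> v) u = d v (\<phi> u)"
      using gdist_reflection[OF R xy v \<phi>uV] reflection_involutive[OF R xy uV] by simp
    moreover have "d (\<phi> v) (\<phi> u) = d v u" using gdist_reflection[OF R xy v uV] .
    ultimately have "v \<in> H (\<phi> u) u" using v by (simp add: mem_half)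
    then show ?thesis using side_far[OF u\<phi>] side_far[OF xy 2] by simp
  next
    case 3
    have "d v (\<phi> u) = d v u"
      using gdist_reflection[OF R xy v uV] reflection_fixes_equi[OF R xy 3] by simp
    then show ?thesis using 3 by (simp add: side_def mem_equi)
  qed
qed

lemma theta_crossing_edge:
  assumes "reflection V E x y \<phi>" "E x y" "u \<in> H x y" "p \<in> V" "q \<in> V"
  shows "theta p q u (\<phi> u) \<longleftrightarrow> theta p q x y"
  using side_crossing_edge[OF assms(1-3)] assms(4,5) by (simp add: theta_def)

end

section \<open>Products from Theta-closed edge partitions\<close>

definition layer :: "('a \<Rightarrow> 'a \<Rightarrow> bool) \<Rightarrow> 'a \<Rightarrow> 'a set" where
  "layer Q z = {a. Q\<^sup>*\<^sup>* z a}"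

(* The vertex where the Q-layer through z meets the R-layer through v. *)
definition proj :: "('a \<Rightarrow> 'a \<Rightarrow> bool) \<Rightarrow> ('a \<Rightarrow> 'a \<Rightarrow> bool) \<Rightarrow> 'a \<Rightarrow> 'a \<Rightarrow> 'a" where
  "proj Q R z v = (THE a. Q\<^sup>*\<^sup>* z a \<and> R\<^sup>*\<^sup>* a v)"

locale theta_split = reflective_graph +
  fixes Q1 Q2 :: "'a \<Rightarrow> 'a \<Rightarrow> bool"
  assumes adj_iff_split: "E a b \<longleftrightarrow> Q1 a b \<or> Q2 a b"
    and split_disjoint: "\<not> (Q1 a b \<and> Q2 a b)"
    and theta_closed1: "E p q \<Longrightarrow> Q1 a b \<Longrightarrow> theta p q a b \<Longrightarrow> Q1 p q"
    and theta_closed2: "E p q \<Longrightarrow> Q2 a b \<Longrightarrow> theta p q a b \<Longrightarrow> Q2 p q"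
begin

lemma theta_split_swap: "theta_split V E Q2 Q1"
  by unfold_locales (use adj_iff_split split_disjoint theta_closed1 theta_closed2 in blast)+

lemma split_adj: "Q1 a b \<Longrightarrow> E a b"
  using adj_iff_split by blast

lemma split_sym:
  assumes "Q1 a b" shows "Q1 b a"
proof -
  have "E b a" using split_adj[OF assms] adj_sym by blast
  moreover have "theta b a a b" using theta_adj_self[OF split_adj[OF assms]] theta_swap_left by blast
  ultimately show ?thesis using theta_closed1 assms by blast
qed

lemma rtranclp_split_sym: "Q1\<^sup>*\<^sup>* a b \<Longrightarrow> Q1\<^sup>*\<^sup>* b a"
  by (induction rule: rtranclp_induct) (auto intro: converse_rtranclp_into_rtranclp split_sym)

lemma rtranclp_split_in_V: "Q1\<^sup>*\<^sup>* a b \<Longrightarrow> a \<in> V \<Longrightarrow> b \<in> V"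
  by (induction rule: rtranclp_induct) (auto dest: split_adj adj_vertices)

text \<open>The reflection in \<open>v w\<close> maps the \<open>Q2\<close>-edge \<open>v u\<close> to the fourth side of the square.\<close>
lemma split_square:
  assumes vu: "Q2 v u" and vw: "Q1 v w"
  shows "\<exists>x. Q1 u x \<and> Q2 x w"
proof -
  have Evu: "E v u" and Evw: "E v w" using vu vw adj_iff_split by auto
  have V: "v \<in> V" "u \<in> V" "w \<in> V" using Evu Evw adj_vertices by auto
  have "u \<noteq> w" using vu vw split_disjoint by blast
  have "\<not> E u w"
  proof
    assume "E u w"
    then have "side v w u = 0" using gdist_adj Evu adj_sym by (simp add: side_def)
    moreover have "side v w v = -1" using gdist_adj[OF Evw] by (simp add: side_def)
    ultimately have "theta v u v w" by (simp add: theta_def)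
    then show False using theta_closed1[OF Evu vw] vu split_disjoint by blast
  qed
  then have duw: "d u w = 2" using gdist_eq_2[OF Evu Evw \<open>u \<noteq> w\<close>] by blast
  obtain \<psi> where R: "reflection V E v w \<psi>" using Evw by (rule reflectionE)
  have u: "u \<in> H v w" using V duw gdist_adj[OF Evu] by (simp add: mem_half gdist_sym)
  define x where "x = \<psi> u"
  have ux: "E u x" using reflection_crossing_adj[OF R Evw u] x_def by simp
  have x: "x \<in> H w v" using reflection_mem_half_iff(2)[OF R Evw V(2)] u x_def by simp
  have wx: "E w x" using reflection_adj_iff[OF R Evw V(1,2)] Evu reflection_x[OF R Evw] x_def by simp
  have "theta u x v w" using side_near[OF Evw u] side_far[OF Evw x] by (simp add: theta_def)
  then have "Q1 u x" using theta_closed1[OF ux vw] by blast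
  have "d x v = 2"
    using gdist_reflection[OF R Evw V(2,3)] reflection_y[OF R Evw] duw x_def by simp
  then have "side v u x = 1" using gdist_adj[OF ux] by (simp add: side_def gdist_sym)
  moreover have "side v u w = -1" using gdist_adj[OF Evw] duw by (simp add: side_def gdist_sym)
  ultimately have "theta x w v u" by (simp add: theta_def)
  then have "Q2 x w" using theta_closed2[OF adj_sym[OF wx] vu] by blast
  with \<open>Q1 u x\<close> show ?thesis by blast
qed

lemma side_rtranclp_invariant: "Q2\<^sup>*\<^sup>* x y \<Longrightarrow> Q1 p q \<Longrightarrow> side p q x = side p q y"
proof (induction rule: rtranclp_induct)
  case (step y z)
  have "\<not> theta y z p q"
    using theta_closed1[OF _ step.prems] step.hyps(2) split_disjoint adj_iff_split by blast
  then show ?case using step by (simp add: theta_def)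
qed simp

text \<open>A geodesic from \<open>x\<close> towards \<open>y\<close> starts with an edge whose side function separates
  \<open>x\<close> from \<open>y\<close>; paths in the other class cannot cross it.\<close>
lemma rtranclp_split_unique:
  assumes x: "x \<in> V" and Q1: "Q1\<^sup>*\<^sup>* x y" and Q2: "Q2\<^sup>*\<^sup>* x y"
  shows "x = y"
proof (rule ccontr)
  interpret swap: theta_split V E Q2 Q1 by (rule theta_split_swap)
  assume "x \<noteq> y"
  have y: "y \<in> V" using rtranclp_split_in_V[OF Q1 x] .
  then obtain n where n: "d y x = Suc n" using gdist_eq_0_iff[OF y x] \<open>x \<noteq> y\<close> not0_implies_Suc by metis
  then obtain x' where xx': "E x x'" and "d y x' = n" using gdist_SucE[OF y x] by metis
  then have separates: "side x x' x \<noteq> side x x' y" using n gdist_adj[OF xx'] by (simp add: side_def)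
  consider "Q1 x x'" | "Q2 x x'" using xx' adj_iff_split by blast
  then show False
  proof cases
    case 1
    then show False using side_rtranclp_invariant[OF Q2 1] separates by simp
  next
    case 2
    then show False using swap.side_rtranclp_invariant[OF Q1 2] separates by simp
  qed
qed

lemma split_commute: "Q2\<^sup>*\<^sup>* u v \<Longrightarrow> Q1 v w \<Longrightarrow> \<exists>x. Q1 u x \<and> Q2\<^sup>*\<^sup>* x w"
proof (induction arbitrary: w rule: converse_rtranclp_induct)
  case (step u u')
  interpret swap: theta_split V E Q2 Q1 by (rule theta_split_swap)
  obtain x' where "Q1 u' x'" "Q2\<^sup>*\<^sup>* x' w" using step.IH step.prems by blast
  moreover obtain x where "Q1 u x" "Q2 x x'"
    using split_square[OF swap.split_sym[OF step.hyps(1)] \<open>Q1 u' x'\<close>] by blast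
  ultimately show ?case by (meson converse_rtranclp_into_rtranclp)
qed blast

lemma rtranclp_split_commute:
  assumes "Q2\<^sup>*\<^sup>* u v" and "Q1\<^sup>*\<^sup>* v w" shows "\<exists>x. Q1\<^sup>*\<^sup>* u x \<and> Q2\<^sup>*\<^sup>* x w"
  using assms(2)
proof (induction rule: rtranclp_induct)
  case (step w' w)
  then obtain x' where "Q1\<^sup>*\<^sup>* u x'" "Q2\<^sup>*\<^sup>* x' w'" by blast
  moreover obtain x where "Q1 x' x" "Q2\<^sup>*\<^sup>* x w" using split_commute[OF \<open>Q2\<^sup>*\<^sup>* x' w'\<close> step(2)] by blast
  ultimately show ?case by (meson rtranclp.rtrancl_into_rtrancl)
qed (use assms(1) in blast)

lemma rtranclp_adj_split: "E\<^sup>*\<^sup>* u v \<Longrightarrow> \<exists>a. Q1\<^sup>*\<^sup>* u a \<and> Q2\<^sup>*\<^sup>* a v"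
proof (induction rule: rtranclp_induct)
  case (step v w)
  then obtain a where a: "Q1\<^sup>*\<^sup>* u a" "Q2\<^sup>*\<^sup>* a v" by blast
  consider "Q1 v w" | "Q2 v w" using step(2) adj_iff_split by blast
  then show ?case
  proof cases
    case 1
    then obtain x where "Q1 a x" "Q2\<^sup>*\<^sup>* x w" using split_commute[OF a(2)] by blast
    then show ?thesis using a(1) by (meson rtranclp.rtrancl_into_rtrancl)
  next
    case 2
    then show ?thesis using a by (meson rtranclp.rtrancl_into_rtrancl)
  qed
qed blast

lemma ex1_proj:
  assumes z: "z \<in> V" and v: "v \<in> V" shows "\<exists>!a. Q1\<^sup>*\<^sup>* z a \<and> Q2\<^sup>*\<^sup>* a v"
proof -
  interpret swap: theta_split V E Q2 Q1 by (rule theta_split_swap)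
  have "E\<^sup>*\<^sup>* z v" using connected z v unfolding connected_graph_def by (meson relpowp_imp_rtranclp)
  then obtain a where a: "Q1\<^sup>*\<^sup>* z a" "Q2\<^sup>*\<^sup>* a v" using rtranclp_adj_split by blast
  moreover have "a' = a" if "Q1\<^sup>*\<^sup>* z a'" "Q2\<^sup>*\<^sup>* a' v" for a'
  proof (rule rtranclp_split_unique)
    show "a' \<in> V" using rtranclp_split_in_V[OF that(1) z] .
    show "Q1\<^sup>*\<^sup>* a' a" using rtranclp_split_sym[OF that(1)] a(1) by (rule rtranclp_trans)
    show "Q2\<^sup>*\<^sup>* a' a" using that(2) swap.rtranclp_split_sym[OF a(2)] by (rule rtranclp_trans)
  qed
  ultimately show ?thesis by blast
qed

lemma proj_rtranclp:
  assumes "z \<in> V" "v \<in> V"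
  shows "Q1\<^sup>*\<^sup>* z (proj Q1 Q2 z v)" and "Q2\<^sup>*\<^sup>* (proj Q1 Q2 z v) v"
  using theI'[OF ex1_proj[OF assms]] by (simp_all add: proj_def)

lemma proj_eqI:
  assumes z: "z \<in> V" and "Q1\<^sup>*\<^sup>* z a" "Q2\<^sup>*\<^sup>* a v" shows "proj Q1 Q2 z v = a"
proof -
  interpret swap: theta_split V E Q2 Q1 by (rule theta_split_swap)
  have "v \<in> V" using swap.rtranclp_split_in_V[OF assms(3) rtranclp_split_in_V[OF assms(2) z]] .
  then show ?thesis unfolding proj_def using the1_equality[OF ex1_proj[OF z]] assms(2,3) by blast
qed

lemma proj_of_split:
  assumes z: "z \<in> V" and u: "u \<in> V" and uv: "Q1 u v"
  shows "induced E (layer Q1 z) (proj Q1 Q2 z u) (proj Q1 Q2 z v)"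
    and "proj Q2 Q1 z u = proj Q2 Q1 z v"
proof -
  interpret swap: theta_split V E Q2 Q1 by (rule theta_split_swap)
  have "Q1\<^sup>*\<^sup>* (proj Q2 Q1 z u) v"
    using swap.proj_rtranclp(2)[OF z u] uv by (rule rtranclp.rtrancl_into_rtrancl)
  then show "proj Q2 Q1 z u = proj Q2 Q1 z v"
    using swap.proj_eqI[OF z swap.proj_rtranclp(1)[OF z u]] by simp
  obtain x where x: "Q1 (proj Q1 Q2 z u) x" "Q2\<^sup>*\<^sup>* x v"
    using split_commute[OF proj_rtranclp(2)[OF z u] uv] by blast
  have zx: "Q1\<^sup>*\<^sup>* z x" using proj_rtranclp(1)[OF z u] x(1) by (rule rtranclp.rtrancl_into_rtrancl)
  then have "proj Q1 Q2 z v = x" using proj_eqI[OF z _ x(2)] by blast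
  then show "induced E (layer Q1 z) (proj Q1 Q2 z u) (proj Q1 Q2 z v)"
    using x(1) zx proj_rtranclp(1)[OF z u] split_adj by (simp add: induced_def layer_def)
qed

lemma split_of_proj:
  assumes z: "z \<in> V" and u: "u \<in> V" and v: "v \<in> V"
    and adj: "induced E (layer Q1 z) (proj Q1 Q2 z u) (proj Q1 Q2 z v)"
    and same2: "proj Q2 Q1 z u = proj Q2 Q1 z v"
  shows "Q1 u v"
proof -
  interpret swap: theta_split V E Q2 Q1 by (rule theta_split_swap)
  let ?a = "proj Q1 Q2 z u" and ?a' = "proj Q1 Q2 z v"
  have E: "E ?a ?a'" using adj by (simp add: induced_def)
  have aV: "?a \<in> V" using E adj_vertices by blast
  have "Q1 ?a ?a'"
  proof (rule ccontr)
    assume "\<not> Q1 ?a ?a'"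
    then have "Q2\<^sup>*\<^sup>* ?a ?a'" using E adj_iff_split by blast
    moreover have "Q1\<^sup>*\<^sup>* ?a ?a'"
      using rtranclp_split_sym[OF proj_rtranclp(1)[OF z u]] proj_rtranclp(1)[OF z v]
      by (rule rtranclp_trans)
    ultimately have "?a = ?a'" using rtranclp_split_unique[OF aV] by blast
    then show False using E adj_irrefl by simp
  qed
  then obtain x where x: "Q1 u x" "Q2\<^sup>*\<^sup>* x ?a'"
    using split_commute[OF swap.rtranclp_split_sym[OF proj_rtranclp(2)[OF z u]]] by blast
  have xV: "x \<in> V" using x(1) split_adj adj_vertices by blast
  have "Q2\<^sup>*\<^sup>* x v" using x(2) proj_rtranclp(2)[OF z v] by (rule rtranclp_trans)
  moreover have "Q1\<^sup>*\<^sup>* x v"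
  proof -
    have "Q1\<^sup>*\<^sup>* x (proj Q2 Q1 z u)"
      using split_sym[OF x(1)] rtranclp_split_sym[OF swap.proj_rtranclp(2)[OF z u]]
      by (rule converse_rtranclp_into_rtranclp)
    then show ?thesis using same2 swap.proj_rtranclp(2)[OF z v] by (metis rtranclp_trans)
  qed
  ultimately have "x = v" using rtranclp_split_unique[OF xV] by blast
  then show "Q1 u v" using x(1) by simp
qed

lemma split_iff_proj:
  assumes "z \<in> V" "u \<in> V" "v \<in> V"
  shows "Q1 u v \<longleftrightarrow> induced E (layer Q1 z) (proj Q1 Q2 z u) (proj Q1 Q2 z v)
    \<and> proj Q2 Q1 z u = proj Q2 Q1 z v"
  using proj_of_split[OF assms(1,2)] split_of_proj[OF assms] by blast

lemma inj_on_proj: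
  assumes z: "z \<in> V"
  shows "inj_on (\<lambda>v. (proj Q1 Q2 z v, proj Q2 Q1 z v)) V"
proof (rule inj_onI)
  interpret swap: theta_split V E Q2 Q1 by (rule theta_split_swap)
  fix u v assume u: "u \<in> V" and v: "v \<in> V"
    and "(proj Q1 Q2 z u, proj Q2 Q1 z u) = (proj Q1 Q2 z v, proj Q2 Q1 z v)"
  then have same: "proj Q1 Q2 z u = proj Q1 Q2 z v" "proj Q2 Q1 z u = proj Q2 Q1 z v" by simp_all
  have "Q2\<^sup>*\<^sup>* u v"
    using swap.rtranclp_split_sym[OF proj_rtranclp(2)[OF z u]] proj_rtranclp(2)[OF z v] same(1)
    by (metis rtranclp_trans)
  moreover have "Q1\<^sup>*\<^sup>* u v"
    using rtranclp_split_sym[OF swap.proj_rtranclp(2)[OF z u]] swap.proj_rtranclp(2)[OF z v] same(2)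
    by (metis rtranclp_trans)
  ultimately show "u = v" using rtranclp_split_unique[OF u] by blast
qed

lemma proj_image:
  assumes z: "z \<in> V"
  shows "(\<lambda>v. (proj Q1 Q2 z v, proj Q2 Q1 z v)) ` V = layer Q1 z \<times> layer Q2 z"
proof
  interpret swap: theta_split V E Q2 Q1 by (rule theta_split_swap)
  show "(\<lambda>v. (proj Q1 Q2 z v, proj Q2 Q1 z v)) ` V \<subseteq> layer Q1 z \<times> layer Q2 z"
    using proj_rtranclp(1)[OF z] swap.proj_rtranclp(1)[OF z] by (auto simp: layer_def)
  show "layer Q1 z \<times> layer Q2 z \<subseteq> (\<lambda>v. (proj Q1 Q2 z v, proj Q2 Q1 z v)) ` V"
  proof clarify
    fix a b assume "a \<in> layer Q1 z" "b \<in> layer Q2 z"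
    then have a: "Q1\<^sup>*\<^sup>* z a" and b: "Q2\<^sup>*\<^sup>* z b" by (simp_all add: layer_def)
    obtain x where x: "Q2\<^sup>*\<^sup>* a x" "Q1\<^sup>*\<^sup>* x b"
      using swap.rtranclp_split_commute[OF rtranclp_split_sym[OF a] b] by blast
    have "x \<in> V" using swap.rtranclp_split_in_V[OF x(1) rtranclp_split_in_V[OF a z]] .
    moreover have "proj Q1 Q2 z x = a" using proj_eqI[OF z a x(1)] .
    moreover have "proj Q2 Q1 z x = b" using swap.proj_eqI[OF z b rtranclp_split_sym[OF x(2)]] .
    ultimately show "(a, b) \<in> (\<lambda>v. (proj Q1 Q2 z v, proj Q2 Q1 z v)) ` V" by force
  qed
qed

lemma layer_subset_V: "z \<in> V \<Longrightarrow> layer Q1 z \<subseteq> V"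
  using rtranclp_split_in_V by (auto simp: layer_def)

lemma card_layer_ge_2:
  assumes "Q1 z c" shows "card (layer Q1 z) \<ge> 2"
proof -
  have z: "z \<in> V" using split_adj[OF assms] adj_vertices by blast
  have "{z, c} \<subseteq> layer Q1 z" using assms by (auto simp: layer_def)
  moreover have "z \<noteq> c" using split_adj[OF assms] adj_irrefl by blast
  moreover have "finite (layer Q1 z)" using layer_subset_V[OF z] finite_V finite_subset by blast
  ultimately show ?thesis using card_mono[of "layer Q1 z" "{z, c}"] by simp
qed

lemma is_cartesian_product_split:
  assumes "Q1 z c" "Q2 z e" shows "is_cartesian_product V E"
proof -
  interpret swap: theta_split V E Q2 Q1 by (rule theta_split_swap)
  have z: "z \<in> V" using split_adj[OF assms(1)] adj_vertices by blast
  show ?thesis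
  proof (rule is_cartesian_productI)
    show "simple_graph (layer Q1 z) (induced E (layer Q1 z))"
      by (rule simple_graph_induced[OF layer_subset_V[OF z]])
    show "simple_graph (layer Q2 z) (induced E (layer Q2 z))"
      by (rule simple_graph_induced[OF swap.layer_subset_V[OF z]])
    show "card (layer Q1 z) \<ge> 2" by (rule card_layer_ge_2[OF assms(1)])
    show "card (layer Q2 z) \<ge> 2" by (rule swap.card_layer_ge_2[OF assms(2)])
    show "bij_betw (\<lambda>v. (proj Q1 Q2 z v, proj Q2 Q1 z v)) V (layer Q1 z \<times> layer Q2 z)"
      using inj_on_proj[OF z] proj_image[OF z] by (simp add: bij_betw_def)
    show "E u v \<longleftrightarrow> cart_adj (induced E (layer Q1 z)) (induced E (layer Q2 z))
        (proj Q1 Q2 z u, proj Q2 Q1 z u) (proj Q1 Q2 z v, proj Q2 Q1 z v)"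
      if "u \<in> V" "v \<in> V" for u v
      using adj_iff_split split_iff_proj[OF z that] swap.split_iff_proj[OF z that]
      by (auto simp: cart_adj_def)
  qed
qed

end

section \<open>Components of the unit sphere\<close>

locale sphere_component = reflective_graph +
  fixes z :: 'a and C :: "'a set"
  assumes center_in_V: "z \<in> V"
    and component_adj: "c \<in> C \<Longrightarrow> E z c"
    and component_closed: "c \<in> C \<Longrightarrow> E z k \<Longrightarrow> E c k \<Longrightarrow> k \<in> C"
begin

lemma theta_transfer_near:
  assumes ab: "E a b" and z: "z \<in> H a b" and pq: "E p q" and "theta p q a b"
    and c: "c \<in> C" and "theta z c a b"
  shows "\<exists>c'\<in>C. theta p q z c'"
proof -
  obtain \<psi> where R: "reflection V E a b \<psi>" using ab by (rule reflectionE)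
  define k where "k = \<psi> z"
  have zk: "E z k" using reflection_crossing_adj[OF R ab z] k_def by simp
  have zc: "E z c" using component_adj[OF c] .
  have cV: "c \<in> V" using zc adj_vertices by blast
  have "theta z c z k" using theta_crossing_edge[OF R ab z center_in_V cV] \<open>theta z c a b\<close> k_def by simp
  moreover have "side z k z = -1" using gdist_adj[OF zk] by (simp add: side_def)
  moreover have "side z k c = 1 - int (d c k)" using gdist_adj[OF zc] by (simp add: side_def gdist_sym)
  ultimately have "d c k \<noteq> 2" by (simp add: theta_def)
  then have "c = k \<or> E c k" using gdist_eq_2[OF zc zk] by blast
  then have "k \<in> C" using component_closed[OF c zk] c by blast
  moreover have "theta p q z k"
    using theta_crossing_edge[OF R ab z] adj_vertices[OF pq] \<open>theta p q a b\<close> k_def by simp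
  ultimately show ?thesis by blast
qed

lemma theta_transfer_equi:
  assumes ab: "E a b" and z: "z \<in> M a b" and pq: "E p q" and "theta p q a b"
    and c: "c \<in> C" and cH: "c \<in> H a b"
  shows "\<exists>c'\<in>C. theta p q z c'"
proof -
  obtain \<psi> where R: "reflection V E a b \<psi>" using ab by (rule reflectionE)
  define c' where "c' = \<psi> c"
  have cc': "E c c'" using reflection_crossing_adj[OF R ab cH] c'_def by simp
  have cV: "c \<in> V" using cH by (simp add: mem_half)
  have "E z c'"
    using reflection_adj_iff[OF R ab center_in_V cV] reflection_fixes_equi[OF R ab z]
      component_adj[OF c] c'_def by simp
  then have c'C: "c' \<in> C" using component_closed[OF c _ cc'] by blast
  have "theta p q c c'"
    using theta_crossing_edge[OF R ab cH] adj_vertices[OF pq] \<open>theta p q a b\<close> c'_def by simp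
  then have "side p q c \<noteq> side p q c'" using theta_commute by (simp add: theta_def)
  then have "theta z c p q \<or> theta z c' p q" by (auto simp: theta_def)
  then show ?thesis using theta_commute c c'C by blast
qed

lemma theta_transfer:
  assumes pq: "E p q" and ab: "E a b" and th: "theta p q a b" and c: "c \<in> C" and "theta a b z c"
  shows "\<exists>c'\<in>C. theta p q z c'"
proof -
  have cV: "c \<in> V" using component_adj[OF c] adj_vertices by blast
  have thc: "theta z c a b" using \<open>theta a b z c\<close> theta_commute by blast
  consider "z \<in> H a b" | "z \<in> H b a" | "z \<in> M a b" using half_trichotomy[OF center_in_V] by blast
  then show ?thesis
  proof cases
    case 1
    show ?thesis by (rule theta_transfer_near[OF ab 1 pq th c thc])
  next
    case 2
    then show ?thesis
      using theta_transfer_near[OF adj_sym[OF ab] 2 pq _ c] th thc theta_swap_right by blast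
  next
    case 3
    then have "side a b c \<noteq> 0" using thc side_equi by (simp add: theta_def)
    then have "c \<in> H a b \<or> c \<in> H b a" using half_trichotomy[OF cV, of a b] side_equi by blast
    moreover have "z \<in> M b a" using 3 by (auto simp: mem_equi)
    ultimately show ?thesis
      using theta_transfer_equi[OF ab 3 pq th c] theta_transfer_equi[OF adj_sym[OF ab] _ pq _ c]
        th theta_swap_right by blast
  qed
qed

definition C_class :: "'a \<Rightarrow> 'a \<Rightarrow> bool" where
  "C_class a b \<longleftrightarrow> E a b \<and> (\<exists>c\<in>C. theta a b z c)"

definition C_coclass :: "'a \<Rightarrow> 'a \<Rightarrow> bool" where
  "C_coclass a b \<longleftrightarrow> E a b \<and> \<not> (\<exists>c\<in>C. theta a b z c)"

lemma theta_split_C: "theta_split V E C_class C_coclass"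
proof unfold_locales
  show "E a b \<longleftrightarrow> C_class a b \<or> C_coclass a b" for a b
    unfolding C_class_def C_coclass_def by blast
  show "\<not> (C_class a b \<and> C_coclass a b)" for a b
    unfolding C_class_def C_coclass_def by blast
  show "C_class p q" if "E p q" "C_class a b" "theta p q a b" for p q a b
    using that theta_transfer by (auto simp: C_class_def)
  show "C_coclass p q" if "E p q" "C_coclass a b" "theta p q a b" for p q a b
    using that theta_transfer[of a b p q] theta_commute by (auto simp: C_coclass_def)
qed

lemma C_class_center: "c \<in> C \<Longrightarrow> C_class z c"
  using component_adj theta_adj_self by (auto simp: C_class_def)

lemma C_coclass_center:
  assumes zk: "E z k" and k: "k \<notin> C" shows "C_coclass z k"
proof -
  have "\<not> theta z k z c" if c: "c \<in> C" for c
  proof -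
    have zc: "E z c" using component_adj[OF c] .
    have "c \<noteq> k" "\<not> E c k" using c k component_closed[OF c zk] by auto
    then have "d c k = 2" using gdist_eq_2[OF zc zk] by blast
    then show ?thesis using gdist_adj[OF zc] gdist_adj[OF zk] by (simp add: theta_def side_def gdist_sym)
  qed
  then show ?thesis using zk by (simp add: C_coclass_def)
qed

lemma is_cartesian_product_component:
  assumes "c \<in> C" "E z k" "k \<notin> C" shows "is_cartesian_product V E"
proof -
  interpret theta_split V E C_class C_coclass by (rule theta_split_C)
  show ?thesis
    using is_cartesian_product_split[OF C_class_center[OF assms(1)] C_coclass_center[OF assms(2,3)]] .
qed

end

theorem lemma2p7:
  fixes V :: "'a set" and E :: "'a \<Rightarrow> 'a \<Rightarrow> bool" and z :: 'a
  assumes "simple_graph V E"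
    and "connected_graph V E"
    and "reflective V E"
    and "z \<in> V"
    and "disconnected_graph (sphere1 V E z) (induced E (sphere1 V E z))"
  shows "is_cartesian_product V E"
proof -
  interpret reflective_graph V E using assms(1-3) by unfold_locales
  obtain C c k where C: "\<And>c. c \<in> C \<Longrightarrow> E z c" "\<And>c k. c \<in> C \<Longrightarrow> E z k \<Longrightarrow> E c k \<Longrightarrow> k \<in> C"
    and "c \<in> C" "E z k" "k \<notin> C"
    using disconnected_sphere1E[OF assms(4,5)] by blast
  interpret sphere_component V E z C using assms(4) C by unfold_locales
  show ?thesis using is_cartesian_product_component[OF \<open>c \<in> C\<close> \<open>E z k\<close> \<open>k \<notin> C\<close>] .
qed

end
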